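(* Let $\lambda>0$, let $\omega$ be a rooted tree (root $\varrho$) in which every vertex has finitely many and at least one child, and consider the $\lambda$-biased branching random walk $(X(u),u\in\mathbb{T})$ on $\omega$ with reproduction law $\mu$ ($\mu_0=0$, $\mu_1<1$, $m=\sum_k k\mu_k\in(1,\infty)$). Assume that it is strongly recurrent on $\omega$, i.e. for every vertex $x$, $\mathbf{P}_\omega(\forall n\ \exists u\in\mathbb{T}:|u|\ge n, X(u)=x\mid X(\varnothing)=x)=1$. For $a>0$ and a vertex $x$ of $\omega$ set $$q_{a,x}:=\mathbf{P}_\omega\Big(\liminf_{n\to\infty}\max_{|u|=n}\frac{|X(u)|}{n}\ge a\,\Big|\,X(\varnothing)=x\Big).$$ Then $q_{a,x}=q_{a,\varrho}$ for every $a>0$ and every vertex $x$.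
   Context: $|x|$ is the distance of $x$ to $\varrho$, $x_-$ the parent and $\kappa_x$ the number of children of $x$. The $\lambda$-biased random walk on $\omega$ jumps from $\varrho$ to each child with probability $1/\kappa_\varrho$, and from $x\ne\varrho$ to $x_-$ with probability $\lambda/(\lambda+\kappa_x)$ and to each child with probability $1/(\lambda+\kappa_x)$. The branching random walk: genealogy $\mathbb{T}$ is a Bienaymé–Galton–Watson tree with offspring law $\mu$ (root $\varnothing$, $|u|$ = generation); each child of a particle at $x$ is placed independently by one step of the $\lambda$-biased walk from $x$; $\mathbf{P}_\omega$ denotes its law. *)

theory Defs
  imports "HOL-Probability.Probability"
begin

text \<open>Rooted tree \<omega> encoded via Ulam-Harris addresses: vertices are lists of nats,
  the root is [], the parent of x is butlast x, |x| = length x, and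
  kap x is the number of children of x (children are x@[i], i < kap x).\<close>

definition verts :: "(nat list \<Rightarrow> nat) \<Rightarrow> nat list set" where
  "verts kap = {xs. \<forall>i<length xs. xs ! i < kap (take i xs)}"

definition step :: "real \<Rightarrow> (nat list \<Rightarrow> nat) \<Rightarrow> nat list \<Rightarrow> nat list pmf" where
  "step lam kap x =
     (if x = [] then map_pmf (\<lambda>i. [i]) (pmf_of_set {..<kap []})
      else do { b \<leftarrow> bernoulli_pmf (lam / (lam + real (kap x)));
                if b then return_pmf (butlast x)
                else map_pmf (\<lambda>i. x @ [i]) (pmf_of_set {..<kap x}) })"

text \<open>Underlying probability space of the branching random walk: for every
  Ulam-Harris individual u an offspring number N u ~ mu, and independent
  random step maps R u with R u y ~ step y (used as the displacement of u
  from its parent's position y); everything independent.\<close>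
definition brw_space ::
  "real \<Rightarrow> (nat list \<Rightarrow> nat) \<Rightarrow> nat pmf \<Rightarrow>
   ((nat list \<Rightarrow> nat) \<times> (nat list \<Rightarrow> nat list \<Rightarrow> nat list)) measure" where
  "brw_space lam kap \<mu> =
     (PiM UNIV (\<lambda>_::nat list. measure_pmf \<mu>)) \<Otimes>\<^sub>M
     (PiM UNIV (\<lambda>_::nat list. PiM UNIV (\<lambda>y. measure_pmf (step lam kap y))))"

definition alive :: "(nat list \<Rightarrow> nat) \<Rightarrow> nat list \<Rightarrow> bool" where
  "alive N u = (\<forall>i<length u. u ! i < N (take i u))"

fun pos_aux :: "(nat list \<Rightarrow> nat list \<Rightarrow> nat list) \<Rightarrow> nat list \<Rightarrow> nat list \<Rightarrow> nat list \<Rightarrow> nat list" where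
  "pos_aux R v y [] = y"
| "pos_aux R v y (i # is) = pos_aux R (v @ [i]) (R (v @ [i]) y) is"

definition pos :: "(nat list \<Rightarrow> nat list \<Rightarrow> nat list) \<Rightarrow> nat list \<Rightarrow> nat list \<Rightarrow> nat list" where
  "pos R x u = pos_aux R [] x u"

definition gen :: "(nat list \<Rightarrow> nat) \<Rightarrow> nat \<Rightarrow> nat list set" where
  "gen N n = {u. alive N u \<and> length u = n}"

definition recurrent_event :: "nat list \<Rightarrow> ((nat list \<Rightarrow> nat) \<times> (nat list \<Rightarrow> nat list \<Rightarrow> nat list)) set" where
  "recurrent_event x = {w. \<forall>n. \<exists>u. alive (fst w) u \<and> length u \<ge> n \<and> pos (snd w) x u = x}"

definition speed_event :: "real \<Rightarrow> nat list \<Rightarrow> ((nat list \<Rightarrow> nat) \<times> (nat list \<Rightarrow> nat list \<Rightarrow> nat list)) set" where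
  "speed_event a x = {w. liminf (\<lambda>n. SUP u\<in>gen (fst w) n. ereal (real (length (pos (snd w) x u)) / real n)) \<ge> ereal a}"

definition q :: "real \<Rightarrow> (nat list \<Rightarrow> nat) \<Rightarrow> nat pmf \<Rightarrow> real \<Rightarrow> nat list \<Rightarrow> real" where
  "q lam kap \<mu> a x = measure (brw_space lam kap \<mu>) (speed_event a x)"

end

theory Submission
  imports Defs "HOL-Library.Sublist"
begin

(* Grafting an independent copy of the process below an individual v leaves the law of the
   process unchanged (branching property). Hence, decomposing according to the first individual v,
   in breadth-first order, located at a vertex z, the subtree of v is an independent branching
   random walk started at z.

   If the walk started at y almost surely visits z, this gives q(z) <= q(y): when the subtree of
   v has speed at least a, so does the whole process, since |v| is negligible against the
   generation. Strong recurrence at y makes visits to any z reachable by a path of k steps almost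
   sure: the probability p of never visiting z satisfies p <= (1 - P(the spine 0, 00, ... follows
   the path)) p, by the same decomposition at the first visit to y after generation k. Applying
   both facts to the pairs (root, x) and (x, root) yields the equality. *)

section \<open>Splicing product measures\<close>

lemma prod_emb_UNIV_PiE:
  assumes "\<And>i. space (M i) = UNIV"
  shows "prod_emb UNIV M J (Pi\<^sub>E J A) = {x. \<forall>i\<in>J. x i \<in> A i}"
  using assms by (auto simp: prod_emb_def space_PiM PiE_iff)

lemma sets_PiM_cylinder:
  assumes "\<And>i. space (M i) = UNIV" and "finite J" and "\<And>i. i \<in> J \<Longrightarrow> A i \<in> sets (M i)"
  shows "{x. \<forall>i\<in>J. x i \<in> A i} \<in> sets (PiM UNIV M)"
  using assms by (subst prod_emb_UNIV_PiE[symmetric]) (auto intro!: sets_PiM_I)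

lemma emeasure_PiM_cylinder:
  assumes "\<And>i. prob_space (M i)" and "\<And>i. space (M i) = UNIV"
    and "finite J" and "\<And>i. i \<in> J \<Longrightarrow> A i \<in> sets (M i)"
  shows "emeasure (PiM UNIV M) {x. \<forall>i\<in>J. x i \<in> A i} = (\<Prod>i\<in>J. emeasure (M i) (A i))"
  using assms by (subst prod_emb_UNIV_PiE[symmetric]) (auto intro!: emeasure_PiM_emb)

definition splice :: "'i set \<Rightarrow> ('i \<Rightarrow> 'i) \<Rightarrow> ('i \<Rightarrow> 'b) \<times> ('i \<Rightarrow> 'b) \<Rightarrow> 'i \<Rightarrow> 'b" where
  "splice S f = (\<lambda>(x, y) i. if i \<in> S then y (f i) else x i)"

lemma measurable_splice [measurable]:
  "splice S f \<in> measurable (PiM UNIV (\<lambda>_. K) \<Otimes>\<^sub>M PiM UNIV (\<lambda>_. K)) (PiM UNIV (\<lambda>_. K))"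
proof (rule measurable_PiM_single')
  fix i
  show "(\<lambda>w. splice S f w i) \<in> measurable (PiM UNIV (\<lambda>_. K) \<Otimes>\<^sub>M PiM UNIV (\<lambda>_. K)) K"
    by (cases "i \<in> S") (simp_all add: splice_def case_prod_beta)
qed (auto simp: splice_def space_PiM space_pair_measure PiE_iff)

lemma distr_splice_PiM:
  fixes K :: "'b measure" and S :: "'i set" and f :: "'i \<Rightarrow> 'i"
  assumes K: "prob_space K" "space K = UNIV" and f: "inj_on f S"
  shows "distr (PiM UNIV (\<lambda>_. K) \<Otimes>\<^sub>M PiM UNIV (\<lambda>_. K)) (PiM UNIV (\<lambda>_. K)) (splice S f)
    = PiM UNIV (\<lambda>_. K)" (is "distr ?PP ?P _ = ?P")
proof (rule measure_eqI_PiM_infinite[symmetric, OF refl])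
  interpret P: prob_space ?P using K by (intro prob_space_PiM) auto
  show "finite_measure ?P" by unfold_locales
  show "sets (distr ?PP ?P (splice S f)) = sets ?P" by simp
  fix A and J :: "'i set" assume J: "finite J" and A: "\<And>i. i \<in> J \<Longrightarrow> A i \<in> sets K"
  let ?cyl = "\<lambda>J A. {x. \<forall>i\<in>J. x i \<in> A i}"
  have inv: "i \<in> S \<Longrightarrow> the_inv_into S f (f i) = i" for i
    using f by (rule the_inv_into_f_f)
  define C1 where "C1 = ?cyl (J - S) A"
  define C2 where "C2 = ?cyl (f ` (J \<inter> S)) (\<lambda>j. A (the_inv_into S f j))"
  have C_sets: "C1 \<in> sets ?P" "C2 \<in> sets ?P"
    unfolding C1_def C2_def using J A K by (intro sets_PiM_cylinder; auto simp: inv)+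
  have "splice S f -` ?cyl J A \<inter> space ?PP = C1 \<times> C2"
    by (auto simp: C1_def C2_def splice_def inv space_pair_measure space_PiM K)
  then have "emeasure (distr ?PP ?P (splice S f)) (?cyl J A) = emeasure ?P C1 * emeasure ?P C2"
    using J A K C_sets
    by (simp add: emeasure_distr sets_PiM_cylinder P.emeasure_pair_measure_Times)
  also have "\<dots> = (\<Prod>i\<in>J - S. emeasure K (A i)) * (\<Prod>i\<in>J \<inter> S. emeasure K (A i))"
    unfolding C1_def C2_def using J A K f
    by (subst (1 2) emeasure_PiM_cylinder) (auto simp: inv prod.reindex inj_on_subset)
  also have "\<dots> = emeasure ?P (?cyl J A)"
    using J A K by (simp add: emeasure_PiM_cylinder prod.Int_Diff[of J _ S] mult.commute)
  finally show "emeasure ?P (prod_emb UNIV (\<lambda>_. K) J (Pi\<^sub>E J A)) =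
      emeasure (distr ?PP ?P (splice S f)) (prod_emb UNIV (\<lambda>_. K) J (Pi\<^sub>E J A))"
    using K by (simp add: prod_emb_UNIV_PiE)
qed

lemma distr_pair_measure_interchange:
  assumes "prob_space B" "prob_space C" "prob_space D"
  shows "distr ((A \<Otimes>\<^sub>M B) \<Otimes>\<^sub>M (C \<Otimes>\<^sub>M D)) ((A \<Otimes>\<^sub>M C) \<Otimes>\<^sub>M (B \<Otimes>\<^sub>M D))
           (\<lambda>((a, b), (c, d)). ((a, c), (b, d))) = (A \<Otimes>\<^sub>M C) \<Otimes>\<^sub>M (B \<Otimes>\<^sub>M D)"
    (is "distr ?S ?T ?r = ?T")
proof (rule measure_eqI)
  interpret B: prob_space B by fact
  interpret C: prob_space C by fact
  interpret D: prob_space D by fact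
  interpret CD: pair_prob_space C D by unfold_locales
  interpret BD: pair_prob_space B D by unfold_locales
  interpret BC: pair_prob_space B C by unfold_locales
  have "?r = (\<lambda>w. ((fst (fst w), fst (snd w)), (snd (fst w), snd (snd w))))"
    by (auto simp: fun_eq_iff)
  then have r[measurable]: "?r \<in> measurable ?S ?T" by simp
  show "sets (distr ?S ?T ?r) = sets ?T" by simp
  fix X assume "X \<in> sets (distr ?S ?T ?r)"
  then have X[measurable]: "X \<in> sets ?T" by simp
  have "emeasure (distr ?S ?T ?r) X = (\<integral>\<^sup>+ w. indicator X (?r w) \<partial>?S)"
    by (simp add: nn_integral_indicator[symmetric] nn_integral_distr del: nn_integral_indicator)
  also have "\<dots> = (\<integral>\<^sup>+ ab. \<integral>\<^sup>+ cd. indicator X (?r (ab, cd)) \<partial>(C \<Otimes>\<^sub>M D) \<partial>(A \<Otimes>\<^sub>M B))"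
    by (rule CD.nn_integral_fst[symmetric]) measurable
  also have "\<dots> = (\<integral>\<^sup>+ ab. \<integral>\<^sup>+ c. \<integral>\<^sup>+ d. indicator X (?r (ab, (c, d))) \<partial>D \<partial>C \<partial>(A \<Otimes>\<^sub>M B))"
    by (intro nn_integral_cong D.nn_integral_fst[symmetric]) measurable
  also have "\<dots> = (\<integral>\<^sup>+ a. \<integral>\<^sup>+ b. \<integral>\<^sup>+ c. \<integral>\<^sup>+ d. indicator X ((a, c), (b, d)) \<partial>D \<partial>C \<partial>B \<partial>A)"
    by (subst B.nn_integral_fst[symmetric]) (simp_all add: case_prod_beta)
  also have "\<dots> = (\<integral>\<^sup>+ a. \<integral>\<^sup>+ c. \<integral>\<^sup>+ b. \<integral>\<^sup>+ d. indicator X ((a, c), (b, d)) \<partial>D \<partial>B \<partial>C \<partial>A)"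
    by (intro nn_integral_cong BC.Fubini'[symmetric]) measurable
  also have "\<dots> = (\<integral>\<^sup>+ a. \<integral>\<^sup>+ c. \<integral>\<^sup>+ bd. indicator X ((a, c), bd) \<partial>(B \<Otimes>\<^sub>M D) \<partial>C \<partial>A)"
    by (intro nn_integral_cong D.nn_integral_fst) measurable
  also have "\<dots> = (\<integral>\<^sup>+ ac. \<integral>\<^sup>+ bd. indicator X (ac, bd) \<partial>(B \<Otimes>\<^sub>M D) \<partial>(A \<Otimes>\<^sub>M C))"
    by (subst C.nn_integral_fst[symmetric]) (simp_all add: case_prod_beta)
  also have "\<dots> = emeasure ?T X"
    by (rule BD.emeasure_pair_measure[symmetric]) simp
  finally show "emeasure (distr ?S ?T ?r) X = emeasure ?T X" .
qed

section \<open>The branching random walk space\<close>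

type_synonym brw_sample = "(nat list \<Rightarrow> nat) \<times> (nat list \<Rightarrow> nat list \<Rightarrow> nat list)"

abbreviation offspring_space :: "nat pmf \<Rightarrow> (nat list \<Rightarrow> nat) measure" where
  "offspring_space \<mu> \<equiv> PiM UNIV (\<lambda>_. measure_pmf \<mu>)"

abbreviation step_field :: "real \<Rightarrow> (nat list \<Rightarrow> nat) \<Rightarrow> (nat list \<Rightarrow> nat list) measure" where
  "step_field lam kap \<equiv> PiM UNIV (\<lambda>y. measure_pmf (step lam kap y))"

abbreviation displacement_space ::
    "real \<Rightarrow> (nat list \<Rightarrow> nat) \<Rightarrow> (nat list \<Rightarrow> nat list \<Rightarrow> nat list) measure" where
  "displacement_space lam kap \<equiv> PiM UNIV (\<lambda>_. step_field lam kap)"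

lemma brw_space_eq: "brw_space lam kap \<mu> = offspring_space \<mu> \<Otimes>\<^sub>M displacement_space lam kap"
  unfolding brw_space_def ..

lemma prob_space_offspring: "prob_space (offspring_space \<mu>)"
  by (intro prob_space_PiM measure_pmf.prob_space_axioms)

lemma prob_space_step_field: "prob_space (step_field lam kap)"
  by (intro prob_space_PiM measure_pmf.prob_space_axioms)

lemma prob_space_displacement: "prob_space (displacement_space lam kap)"
  by (intro prob_space_PiM prob_space_step_field)

lemma prob_space_brw: "prob_space (brw_space lam kap \<mu>)"
  unfolding brw_space_eq by (intro prob_space_pair prob_space_offspring prob_space_displacement)

lemma space_step_field [simp]: "space (step_field lam kap) = UNIV"
  by (auto simp: space_PiM)

lemma space_brw [simp]: "space (brw_space lam kap \<mu>) = UNIV"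
  by (simp add: brw_space_eq space_pair_measure space_PiM)

lemma measurable_offspring [measurable]:
  "(\<lambda>W. fst W u) \<in> measurable (brw_space lam kap \<mu>) (count_space UNIV)"
proof -
  have "(\<lambda>N. N u) \<in> measurable (offspring_space \<mu>) (count_space UNIV)"
    using measurable_component_singleton[of u UNIV "\<lambda>_. measure_pmf \<mu>"]
    by (simp cong: measurable_cong_sets)
  then show ?thesis unfolding brw_space_eq by measurable
qed

lemma measurable_displacement [measurable]:
  "(\<lambda>W. snd W u y) \<in> measurable (brw_space lam kap \<mu>) (count_space UNIV)"
proof -
  have "(\<lambda>r. r y) \<in> measurable (step_field lam kap) (count_space UNIV)"
    using measurable_component_singleton[of y UNIV "\<lambda>y. measure_pmf (step lam kap y)"]
    by (simp cong: measurable_cong_sets)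
  then show ?thesis unfolding brw_space_eq by measurable
qed

lemma measurable_pos_aux:
  "f \<in> measurable (brw_space lam kap \<mu>) (count_space UNIV) \<Longrightarrow>
   (\<lambda>W. pos_aux (snd W) v (f W) is) \<in> measurable (brw_space lam kap \<mu>) (count_space UNIV)"
proof (induction "is" arbitrary: v f)
  case (Cons i "is")
  have "(\<lambda>W. snd W (v @ [i]) (f W)) \<in> measurable (brw_space lam kap \<mu>) (count_space UNIV)"
    using measurable_compose_countable[where f="\<lambda>y W. snd W (v @ [i]) y", OF _ Cons.prems]
    by measurable
  then show ?case by (simp add: Cons.IH)
qed simp

lemma measurable_pos [measurable]:
  "(\<lambda>W. pos (snd W) y u) \<in> measurable (brw_space lam kap \<mu>) (count_space UNIV)"
  unfolding pos_def by (rule measurable_pos_aux) simp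

lemma pred_alive [measurable]: "Measurable.pred (brw_space lam kap \<mu>) (\<lambda>W. alive (fst W) u)"
  unfolding alive_def by measurable

lemma sets_Collect_brw:
  "Measurable.pred (brw_space lam kap \<mu>) P \<Longrightarrow> {W. P W} \<in> sets (brw_space lam kap \<mu>)"
  by (simp add: pred_def)

section \<open>Grafting and first visits\<close>

lemma alive_Nil [simp]: "alive N []"
  by (simp add: alive_def)

lemma alive_snoc: "alive N (u @ [i]) \<longleftrightarrow> alive N u \<and> i < N u"
  unfolding alive_def by (auto simp: nth_append less_Suc_eq)

lemma alive_append: "alive N (v @ s) \<longleftrightarrow> alive N v \<and> alive (\<lambda>t. N (v @ t)) s"
  by (induction s rule: rev_induct) (simp_all flip: append_assoc add: alive_snoc conj_assoc)

lemma pos_Nil [simp]: "pos R y [] = y"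
  by (simp add: pos_def)

lemma pos_aux_append: "pos_aux R w y (u @ s) = pos_aux R (w @ u) (pos_aux R w y u) s"
  by (induction u arbitrary: w y) auto

lemma pos_snoc: "pos R y (u @ [i]) = R (u @ [i]) (pos R y u)"
  unfolding pos_def by (simp add: pos_aux_append)

text \<open>The displacement of \<open>v\<close> itself stays with the first sample, as it determines the
  position of \<open>v\<close>; the entry \<open>R []\<close>, which never moves anybody, is taken along so that
  \<open>drop (length v)\<close> maps both index sets onto all individuals.\<close>

definition graft :: "nat list \<Rightarrow> brw_sample \<times> brw_sample \<Rightarrow> brw_sample" where
  "graft v = (\<lambda>((N1, R1), (N2, R2)).
     (splice {u. prefix v u} (drop (length v)) (N1, N2),
      splice {u. u = [] \<or> strict_prefix v u} (drop (length v)) (R1, R2)))"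

definition subtree :: "nat list \<Rightarrow> brw_sample \<Rightarrow> brw_sample" where
  "subtree v = (\<lambda>(N, R). (\<lambda>s. N (v @ s), \<lambda>s. if s = [] then R [] else R (v @ s)))"

lemma subtree_graft: "subtree v (graft v (w1, w2)) = w2"
  by (cases w1; cases w2) (auto simp: subtree_def graft_def splice_def fun_eq_iff strict_prefix_def)

lemma alive_graft:
  "\<not> strict_prefix v u \<Longrightarrow> alive (fst (graft v (w1, w2))) u \<longleftrightarrow> alive (fst w1) u"
proof (induction u rule: rev_induct)
  case (snoc i u)
  then have "\<not> prefix v u" "\<not> strict_prefix v u"
    by (auto simp: strict_prefix_def prefix_def)
  with snoc show ?case
    by (cases w1; cases w2) (simp add: alive_snoc graft_def splice_def)
qed simp

lemma pos_graft:
  "\<not> strict_prefix v u \<Longrightarrow> pos (snd (graft v (w1, w2))) y u = pos (snd w1) y u"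
proof (induction u rule: rev_induct)
  case (snoc i u)
  then have "\<not> strict_prefix v (u @ [i])" "\<not> strict_prefix v u"
    by (auto simp: strict_prefix_def prefix_def)
  with snoc show ?case
    by (cases w1; cases w2) (simp add: pos_snoc graft_def splice_def)
qed simp

lemma alive_subtree:
  "alive (fst W) (v @ s) \<longleftrightarrow> alive (fst W) v \<and> alive (fst (subtree v W)) s"
  by (cases W) (simp add: alive_append subtree_def)

lemma pos_subtree: "pos (snd W) y (v @ s) = pos (snd (subtree v W)) (pos (snd W) y v) s"
proof (induction s rule: rev_induct)
  case (snoc i s)
  then show ?case
    by (cases W) (simp flip: append_assoc add: pos_snoc subtree_def)
qed simp

lemma measurable_graft [measurable]:
  "graft v \<in> measurable (brw_space lam kap \<mu> \<Otimes>\<^sub>M brw_space lam kap \<mu>) (brw_space lam kap \<mu>)"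
proof -
  have "graft v = (\<lambda>w. (splice {u. prefix v u} (drop (length v)) (fst (fst w), fst (snd w)),
      splice {u. u = [] \<or> strict_prefix v u} (drop (length v)) (snd (fst w), snd (snd w))))"
    by (auto simp: graft_def fun_eq_iff)
  then show ?thesis unfolding brw_space_eq by simp
qed

lemma distr_graft:
  "distr (brw_space lam kap \<mu> \<Otimes>\<^sub>M brw_space lam kap \<mu>) (brw_space lam kap \<mu>) (graft v)
    = brw_space lam kap \<mu>"
proof -
  let ?N = "offspring_space \<mu>" and ?R = "displacement_space lam kap"
  let ?interchange = "\<lambda>((a, b), (c, d)). ((a, c), (b, d))"
    and ?splices = "\<lambda>(x, y). (splice {u. prefix v u} (drop (length v)) x,
      splice {u. u = [] \<or> strict_prefix v u} (drop (length v)) y)"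
  have inj: "inj_on (drop (length v)) {u. prefix v u}"
    "inj_on (drop (length v)) {u. u = [] \<or> strict_prefix v u}"
    by (auto simp: inj_on_def prefix_def strict_prefix_def)
  have "graft v = ?splices \<circ> ?interchange"
    by (auto simp: graft_def fun_eq_iff)
  then have "distr (brw_space lam kap \<mu> \<Otimes>\<^sub>M brw_space lam kap \<mu>) (brw_space lam kap \<mu>) (graft v)
      = distr (distr ((?N \<Otimes>\<^sub>M ?R) \<Otimes>\<^sub>M (?N \<Otimes>\<^sub>M ?R)) ((?N \<Otimes>\<^sub>M ?N) \<Otimes>\<^sub>M (?R \<Otimes>\<^sub>M ?R)) ?interchange)
          (?N \<Otimes>\<^sub>M ?R) ?splices"
    unfolding brw_space_eq by (subst distr_distr) (auto simp: case_prod_beta')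
  also have "\<dots> = distr ((?N \<Otimes>\<^sub>M ?N) \<Otimes>\<^sub>M (?R \<Otimes>\<^sub>M ?R)) (?N \<Otimes>\<^sub>M ?R) ?splices"
    by (simp add: distr_pair_measure_interchange prob_space_offspring prob_space_displacement)
  also have "\<dots> = distr (?N \<Otimes>\<^sub>M ?N) ?N (splice {u. prefix v u} (drop (length v)))
      \<Otimes>\<^sub>M distr (?R \<Otimes>\<^sub>M ?R) ?R (splice {u. u = [] \<or> strict_prefix v u} (drop (length v)))"
    by (rule pair_measure_distr[symmetric])
      (simp_all add: distr_splice_PiM inj prob_space_step_field prob_space_displacement
        prob_space_imp_sigma_finite)
  also have "\<dots> = brw_space lam kap \<mu>"
    by (simp add: brw_space_eq distr_splice_PiM inj prob_space_step_field
      measure_pmf.prob_space_axioms)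
  finally show ?thesis .
qed

definition visits :: "nat \<Rightarrow> nat list \<Rightarrow> nat list \<Rightarrow> brw_sample \<Rightarrow> nat list \<Rightarrow> bool" where
  "visits L y z W u \<longleftrightarrow> alive (fst W) u \<and> L \<le> length u \<and> pos (snd W) y u = z"

lemma pred_visits [measurable]: "Measurable.pred (brw_space lam kap \<mu>) (\<lambda>W. visits L y z W u)"
  unfolding visits_def by measurable

lemma visits_graft:
  "\<not> strict_prefix v u \<Longrightarrow> visits L y z (graft v (w1, w2)) u \<longleftrightarrow> visits L y z w1 u"
  by (simp add: visits_def alive_graft pos_graft)

lemma visits_append:
  assumes "visits L y x W v" and "visits L' x z (subtree v W) s"
  shows "visits L' y z W (v @ s)"
  using assms by (auto simp: visits_def alive_subtree pos_subtree)

text \<open>Any well-order works in which no individual comes after its strict descendants.\<close>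

definition bfs_less :: "nat list \<Rightarrow> nat list \<Rightarrow> bool" where
  "bfs_less u v \<longleftrightarrow> length u < length v \<or> (length u = length v \<and> to_nat u < to_nat v)"

definition first_visit :: "nat \<Rightarrow> nat list \<Rightarrow> nat list \<Rightarrow> nat list \<Rightarrow> brw_sample set" where
  "first_visit L y z v = {W. visits L y z W v \<and> (\<forall>u. bfs_less u v \<longrightarrow> \<not> visits L y z W u)}"

lemma sets_first_visit [measurable]: "first_visit L y z v \<in> sets (brw_space lam kap \<mu>)"
  unfolding first_visit_def by (intro sets_Collect_brw) measurable

lemma disjoint_family_first_visit: "disjoint_family (first_visit L y z)"
proof -
  have "bfs_less u v \<or> bfs_less v u" if "u \<noteq> v" for u v
    using that unfolding bfs_less_def by (metis linorder_neqE_nat to_nat_split)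
  then show ?thesis
    unfolding disjoint_family_on_def first_visit_def by blast
qed

lemma ex_first_visit:
  assumes "visits L y z W u" shows "\<exists>v. W \<in> first_visit L y z v"
proof -
  have "{(u, v). bfs_less u v} \<subseteq> inv_image (less_than <*lex*> less_than) (\<lambda>u. (length u, to_nat u))"
    by (auto simp: bfs_less_def)
  then have "wf {(u, v). bfs_less u v}"
    by (rule wf_subset[OF wf_inv_image[OF wf_lex_prod[OF wf_less_than wf_less_than]]])
  from wfE_min[OF this, of u "{u. visits L y z W u}"] assms
  show ?thesis by (auto simp: first_visit_def)
qed

lemma graft_in_first_visit_iff:
  "graft v (w1, w2) \<in> first_visit L y z v \<longleftrightarrow> w1 \<in> first_visit L y z v"
proof -
  have "\<not> strict_prefix v u" if "u = v \<or> bfs_less u v" for u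
    using that prefix_length_less by (fastforce simp: bfs_less_def)
  then show ?thesis
    by (auto simp: first_visit_def visits_graft)
qed

lemma emeasure_graft_le:
  assumes G: "G \<in> sets (brw_space lam kap \<mu>)"
    and A: "A \<in> sets (brw_space lam kap \<mu>)" and F: "F \<in> sets (brw_space lam kap \<mu>)"
    and graft_G: "\<And>w1 w2. graft v (w1, w2) \<in> G \<Longrightarrow> w1 \<in> A \<and> w2 \<in> F"
  shows "emeasure (brw_space lam kap \<mu>) G
    \<le> emeasure (brw_space lam kap \<mu>) A * emeasure (brw_space lam kap \<mu>) F"
proof -
  let ?M = "brw_space lam kap \<mu>"
  interpret M: prob_space ?M by (rule prob_space_brw)
  have "emeasure ?M G = emeasure (?M \<Otimes>\<^sub>M ?M) (graft v -` G \<inter> space (?M \<Otimes>\<^sub>M ?M))"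
    using G by (subst distr_graft[symmetric, of _ _ _ v]) (simp add: emeasure_distr)
  also have "\<dots> \<le> emeasure (?M \<Otimes>\<^sub>M ?M) (A \<times> F)"
  proof (intro emeasure_mono subsetI)
    fix w assume "w \<in> graft v -` G \<inter> space (?M \<Otimes>\<^sub>M ?M)"
    then show "w \<in> A \<times> F" using graft_G[of "fst w" "snd w"] by (simp add: mem_Times_iff)
  qed (use A F in simp)
  also have "\<dots> = emeasure ?M A * emeasure ?M F"
    using A F by (rule M.emeasure_pair_measure_Times)
  finally show ?thesis .
qed

lemma measure_le_mult_first_visit:
  assumes B: "B \<in> sets (brw_space lam kap \<mu>)"
    and D: "D \<in> sets (brw_space lam kap \<mu>)" and B': "B' \<in> sets (brw_space lam kap \<mu>)"
    and visit: "AE W in brw_space lam kap \<mu>. \<exists>u. visits L y z W u"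
    and graft_B: "\<And>v w1 w2. graft v (w1, w2) \<in> B \<Longrightarrow> graft v (w1, w2) \<in> first_visit L y z v
      \<Longrightarrow> w1 \<in> D \<and> w2 \<in> B'"
  shows "measure (brw_space lam kap \<mu>) B
    \<le> measure (brw_space lam kap \<mu>) D * measure (brw_space lam kap \<mu>) B'"
proof -
  let ?M = "brw_space lam kap \<mu>"
  interpret M: prob_space ?M by (rule prob_space_brw)
  have disj: "disjoint_family (\<lambda>v. C \<inter> first_visit L y z v)" for C
    using disjoint_family_first_visit[of L y z] by (auto simp: disjoint_family_on_def)
  have "AE W in ?M. W \<in> B \<longrightarrow> W \<in> (\<Union>v. B \<inter> first_visit L y z v)"
    using visit by eventually_elim (blast dest: ex_first_visit)
  then have "emeasure ?M B \<le> emeasure ?M (\<Union>v. B \<inter> first_visit L y z v)"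
    using B by (intro emeasure_mono_AE) auto
  also have "\<dots> = (\<integral>\<^sup>+v. emeasure ?M (B \<inter> first_visit L y z v) \<partial>count_space UNIV)"
    using B disj by (intro emeasure_UN_countable) auto
  also have "\<dots> \<le> (\<integral>\<^sup>+v. emeasure ?M (D \<inter> first_visit L y z v) * emeasure ?M B' \<partial>count_space UNIV)"
  proof (intro nn_integral_mono emeasure_graft_le)
    fix v w1 w2 assume "graft v (w1, w2) \<in> B \<inter> first_visit L y z v"
    then show "w1 \<in> D \<inter> first_visit L y z v \<and> w2 \<in> B'"
      using graft_B graft_in_first_visit_iff by blast
  qed (use B D B' in auto)
  also have "\<dots> = (\<integral>\<^sup>+v. emeasure ?M (D \<inter> first_visit L y z v) \<partial>count_space UNIV) * emeasure ?M B'"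
    by (rule nn_integral_multc) simp
  also have "(\<integral>\<^sup>+v. emeasure ?M (D \<inter> first_visit L y z v) \<partial>count_space UNIV)
      = emeasure ?M (\<Union>v. D \<inter> first_visit L y z v)"
    using D disj by (intro emeasure_UN_countable[symmetric]) auto
  also have "\<dots> \<le> emeasure ?M D"
    using D by (intro emeasure_mono) auto
  finally have "emeasure ?M B \<le> emeasure ?M D * emeasure ?M B'"
    by (simp add: mult_right_mono)
  then show ?thesis
    by (simp add: M.emeasure_eq_measure ennreal_mult[symmetric] ennreal_le_iff)
qed

section \<open>Almost sure visits\<close>

lemma sets_recurrent_event [measurable]: "recurrent_event x \<in> sets (brw_space lam kap \<mu>)"
  unfolding recurrent_event_def by (intro sets_Collect_brw) measurable

lemma AE_revisit:
  assumes "measure (brw_space lam kap \<mu>) (recurrent_event y) = 1"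
  shows "AE W in brw_space lam kap \<mu>. \<exists>u. visits L y y W u"
proof -
  interpret M: prob_space "brw_space lam kap \<mu>" by (rule prob_space_brw)
  have "AE W in brw_space lam kap \<mu>. W \<in> recurrent_event y"
    using assms by (intro M.AE_prob_1) auto
  then show ?thesis
    by eventually_elim (auto simp: recurrent_event_def visits_def)
qed

lemma visits_spine:
  assumes "p 0 = y" and "\<forall>j<k. 1 \<le> N (replicate j 0)"
    and "\<forall>j<k. R (replicate (Suc j) 0) (p j) = p (Suc j)"
  shows "visits 0 y (p k) (N, R) (replicate k 0)"
  using assms
proof (induction k)
  case (Suc k)
  then have "visits 0 y (p k) (N, R) (replicate k 0)" "1 \<le> N (replicate k 0)"
    "R (replicate k 0 @ [0]) (p k) = p (Suc k)"
    by (simp_all flip: replicate_append_same)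
  then show ?case
    by (simp flip: replicate_append_same add: visits_def alive_snoc pos_snoc Suc_le_eq)
qed (simp add: visits_def)

lemma sets_offspring_cylinder:
  "finite J \<Longrightarrow> {N. \<forall>i\<in>J. 0 < N i} \<in> sets (offspring_space \<mu>)"
  using sets_PiM_cylinder[of "\<lambda>_. measure_pmf \<mu>" J "\<lambda>_. {n. 0 < n}"] by simp

lemma emeasure_offspring_cylinder:
  assumes "pmf \<mu> 0 = 0" and "finite J"
  shows "emeasure (offspring_space \<mu>) {N. \<forall>i\<in>J. 0 < N i} = 1"
proof -
  have "0 \<notin> set_pmf \<mu>"
    using assms(1) by (simp add: set_pmf_iff)
  then have "emeasure (measure_pmf \<mu>) {n. 0 < n} = 1"
    by (subst measure_pmf.emeasure_eq_1_AE) (auto simp: AE_measure_pmf_iff intro: gr0I)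
  then show ?thesis
    using emeasure_PiM_cylinder[of "\<lambda>_. measure_pmf \<mu>" J "\<lambda>_. {n. 0 < n}"] assms(2)
    by (simp add: measure_pmf.prob_space_axioms)
qed

lemma sets_step_field_eq: "{r. r y = z} \<in> sets (step_field lam kap)"
  using sets_PiM_cylinder[of "\<lambda>y. measure_pmf (step lam kap y)" "{y}" "\<lambda>_. {z}"] by simp

lemma emeasure_step_field_eq:
  "emeasure (step_field lam kap) {r. r y = z} = pmf (step lam kap y) z"
  using emeasure_PiM_cylinder[of "\<lambda>y. measure_pmf (step lam kap y)" "{y}" "\<lambda>_. {z}"]
  by (simp add: measure_pmf.prob_space_axioms emeasure_pmf_single)

lemma sets_displacement_cylinder:
  "finite J \<Longrightarrow> {R. \<forall>i\<in>J. R i (a i) = b i} \<in> sets (displacement_space lam kap)"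
  using sets_PiM_cylinder[of "\<lambda>_. step_field lam kap" J "\<lambda>i. {r. r (a i) = b i}"]
  by (simp add: sets_step_field_eq)

lemma emeasure_displacement_cylinder:
  "finite J \<Longrightarrow> emeasure (displacement_space lam kap) {R. \<forall>i\<in>J. R i (a i) = b i}
    = (\<Prod>i\<in>J. ennreal (pmf (step lam kap (a i)) (b i)))"
  using emeasure_PiM_cylinder[of "\<lambda>_. step_field lam kap" J "\<lambda>i. {r. r (a i) = b i}"]
  by (simp add: prob_space_step_field sets_step_field_eq emeasure_step_field_eq)

lemma spine_visit_prob_pos:
  assumes mu0: "pmf \<mu> 0 = 0" and "p 0 = y"
    and steps: "\<forall>j<k. p (Suc j) \<in> set_pmf (step lam kap (p j))"
  shows "0 < measure (brw_space lam kap \<mu>) {W. visits 0 y (p k) W (replicate k 0)}"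
proof -
  let ?M = "brw_space lam kap \<mu>"
  interpret M: prob_space ?M by (rule prob_space_brw)
  interpret R: prob_space "displacement_space lam kap" by (rule prob_space_displacement)
  define JN where "JN = (\<lambda>j. replicate j (0::nat)) ` {..<k}"
  define JR where "JR = (\<lambda>j. replicate (Suc j) (0::nat)) ` {..<k}"
  define CN where "CN = {N :: nat list \<Rightarrow> nat. \<forall>i\<in>JN. 0 < N i}"
  define CR where "CR = {R. \<forall>i\<in>JR. R i (p (length i - 1)) = p (length i)}"
  have "CN \<in> sets (offspring_space \<mu>)" "CR \<in> sets (displacement_space lam kap)"
    unfolding CN_def CR_def JN_def JR_def
    by (simp_all only: sets_offspring_cylinder sets_displacement_cylinder finite_imageI finite_lessThan)
  moreover have "emeasure (offspring_space \<mu>) CN \<noteq> 0"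
    unfolding CN_def JN_def
    by (simp only: emeasure_offspring_cylinder[OF mu0] finite_imageI finite_lessThan) simp
  moreover have "emeasure (displacement_space lam kap) CR \<noteq> 0"
    unfolding CR_def JR_def using steps
    by (simp only: emeasure_displacement_cylinder finite_imageI finite_lessThan)
      (auto simp: ennreal_prod_eq_0 set_pmf_iff)
  ultimately have "emeasure ?M (CN \<times> CR) \<noteq> 0"
    unfolding brw_space_eq by (simp add: R.emeasure_pair_measure_Times)
  moreover have "emeasure ?M (CN \<times> CR) \<le> emeasure ?M {W. visits 0 y (p k) W (replicate k 0)}"
  proof (rule emeasure_mono)
    show "CN \<times> CR \<subseteq> {W. visits 0 y (p k) W (replicate k 0)}"
      using \<open>p 0 = y\<close> by (auto simp: CN_def CR_def JN_def JR_def Suc_le_eq intro!: visits_spine)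
    show "{W. visits 0 y (p k) W (replicate k 0)} \<in> sets ?M"
      by (intro sets_Collect_brw) measurable
  qed
  ultimately have "emeasure ?M {W. visits 0 y (p k) W (replicate k 0)} \<noteq> 0"
    by auto
  then show ?thesis
    by (simp add: M.emeasure_eq_measure zero_less_measure_iff)
qed

lemma AE_visit_of_path:
  assumes mu0: "pmf \<mu> 0 = 0"
    and recurrent: "measure (brw_space lam kap \<mu>) (recurrent_event y) = 1"
    and path: "p 0 = y" "p k = z" "\<forall>j<k. p (Suc j) \<in> set_pmf (step lam kap (p j))"
  shows "AE W in brw_space lam kap \<mu>. \<exists>u. visits 0 y z W u"
proof -
  let ?M = "brw_space lam kap \<mu>"
  interpret M: prob_space ?M by (rule prob_space_brw)
  define Miss where "Miss = {W. \<forall>u. \<not> visits 0 y z W u}"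
  define Spine where "Spine = {W. visits 0 y z W (replicate k 0)}"
  have Miss_sets: "Miss \<in> sets ?M" and Spine_sets: "Spine \<in> sets ?M"
    unfolding Miss_def Spine_def by (intro sets_Collect_brw; measurable)+
  have Spine_pos: "0 < measure ?M Spine"
    using spine_visit_prob_pos[OF mu0 path(1,3)] path(2) by (simp add: Spine_def)
  text \<open>Decompose at the first return to \<open>y\<close> after generation \<open>k\<close>: the spine up to
    generation \<open>k\<close> lies outside the grafted subtree, which must miss \<open>z\<close> as well.\<close>
  have "measure ?M Miss \<le> measure ?M (space ?M - Spine) * measure ?M Miss"
  proof (rule measure_le_mult_first_visit[OF Miss_sets _ Miss_sets AE_revisit[OF recurrent]])
    fix v w1 w2
    assume miss: "graft v (w1, w2) \<in> Miss" and first: "graft v (w1, w2) \<in> first_visit (Suc k) y y v"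
    then have "\<not> strict_prefix v (replicate k 0)"
      by (auto simp: first_visit_def visits_def dest: prefix_length_less)
    then have "visits 0 y z (graft v (w1, w2)) (replicate k 0) \<longleftrightarrow> visits 0 y z w1 (replicate k 0)"
      by (rule visits_graft)
    with miss have "w1 \<notin> Spine"
      by (simp add: Miss_def Spine_def)
    moreover have "w2 \<in> Miss"
      using miss first visits_append[of "Suc k" y y "graft v (w1, w2)" v 0 z]
      by (auto simp: Miss_def first_visit_def subtree_graft)
    ultimately show "w1 \<in> space ?M - Spine \<and> w2 \<in> Miss" by simp
  qed (use Spine_sets in \<open>metis sets.compl_sets\<close>)
  also have "\<dots> = (1 - measure ?M Spine) * measure ?M Miss"
    using M.prob_compl[OF Spine_sets] by simp
  finally have "measure ?M Miss = 0"
    using Spine_pos by (smt (verit) measure_nonneg mult_le_cancel_right1)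
  then show ?thesis
    using Miss_sets by (subst AE_iff_measurable[of Miss]) (auto simp: Miss_def M.emeasure_eq_measure)
qed

section \<open>Speed\<close>

text \<open>Rational thresholds turn the speed event into a countable combination of measurable
  events.\<close>

definition outruns :: "real \<Rightarrow> nat list \<Rightarrow> brw_sample \<Rightarrow> bool" where
  "outruns c y W \<longleftrightarrow> (\<exists>n0. \<forall>n\<ge>n0. \<exists>u. alive (fst W) u \<and> length u = n \<and>
     c < real (length (pos (snd W) y u)) / real n)"

lemma speed_event_iff:
  "W \<in> speed_event a y \<longleftrightarrow> (\<forall>c::rat. real_of_rat c < a \<longrightarrow> outruns (real_of_rat c) y W)"
proof -
  let ?X = "\<lambda>n. SUP u\<in>gen (fst W) n. ereal (real (length (pos (snd W) y u)) / real n)"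
  have eventually_iff: "(\<forall>\<^sub>F n in sequentially. ereal c < ?X n) \<longleftrightarrow> outruns c y W" for c
    by (auto simp: outruns_def eventually_sequentially less_SUP_iff gen_def)
  have "W \<in> speed_event a y \<longleftrightarrow> (\<forall>b<ereal a. \<forall>\<^sub>F n in sequentially. b < ?X n)"
    by (simp add: speed_event_def le_Liminf_iff)
  also have "\<dots> \<longleftrightarrow> (\<forall>c::rat. real_of_rat c < a \<longrightarrow> outruns (real_of_rat c) y W)"
  proof (intro iffI allI impI)
    fix c :: rat
    assume "\<forall>b<ereal a. \<forall>\<^sub>F n in sequentially. b < ?X n" and "real_of_rat c < a"
    then show "outruns (real_of_rat c) y W"
      by (simp flip: eventually_iff)
  next
    fix b assume rat: "\<forall>c::rat. real_of_rat c < a \<longrightarrow> outruns (real_of_rat c) y W"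
      and "b < ereal a"
    then obtain r where r: "b < ereal r" "r < a"
      using ereal_dense2[OF \<open>b < ereal a\<close>] by auto
    then obtain c :: rat where c: "r < real_of_rat c" "real_of_rat c < a"
      using of_rat_dense by blast
    with rat have "\<forall>\<^sub>F n in sequentially. ereal (real_of_rat c) < ?X n"
      by (simp add: eventually_iff)
    moreover have "b < ereal (real_of_rat c)"
      using r(1) c(1) by (meson less_ereal.simps(1) order.strict_trans)
    ultimately show "\<forall>\<^sub>F n in sequentially. b < ?X n"
      by (auto elim: eventually_mono)
  qed
  finally show ?thesis .
qed

lemma sets_speed_event [measurable]: "speed_event a y \<in> sets (brw_space lam kap \<mu>)"
proof -
  have "speed_event a y = {W. \<forall>c::rat. real_of_rat c < a \<longrightarrow> outruns (real_of_rat c) y W}"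
    by (auto simp: speed_event_iff)
  also have "\<dots> \<in> sets (brw_space lam kap \<mu>)"
    unfolding outruns_def by (intro sets_Collect_brw) measurable
  finally show ?thesis .
qed

lemma eventually_mult_add_le_mult:
  fixes c c' :: real and d :: nat
  assumes "c < c'" and "0 < c'"
  shows "\<forall>\<^sub>F n in sequentially. c * real (n + d) \<le> c' * real n"
  unfolding eventually_sequentially
proof (intro exI[of _ "nat \<lceil>c * real d / (c' - c)\<rceil>"] allI impI)
  fix n assume n: "nat \<lceil>c * real d / (c' - c)\<rceil> \<le> n"
  show "c * real (n + d) \<le> c' * real n"
  proof (cases "c \<le> 0")
    case True
    then show ?thesis using \<open>0 < c'\<close> by (simp add: mult_nonpos_nonneg order_trans[of _ 0])
  next
    case False
    have "c * real d / (c' - c) \<le> real n"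
      using n by linarith
    then show ?thesis using \<open>c < c'\<close> by (simp add: pos_divide_le_eq algebra_simps)
  qed
qed

lemma outruns_of_subtree:
  assumes visit: "visits 0 y z W v" and "c < c'" and "0 < c'"
    and outruns: "outruns c' z (subtree v W)"
  shows "outruns c y W"
proof -
  obtain K where K: "\<And>n. K \<le> n \<Longrightarrow> c * real (n + length v) \<le> c' * real n"
    using eventually_mult_add_le_mult[OF \<open>c < c'\<close> \<open>0 < c'\<close>, of "length v"]
    unfolding eventually_sequentially by blast
  from outruns obtain n0 where n0: "\<forall>n\<ge>n0. \<exists>s. alive (fst (subtree v W)) s \<and> length s = n \<and>
      c' < real (length (pos (snd (subtree v W)) z s)) / real n"
    unfolding outruns_def by blast
  show ?thesis
    unfolding outruns_def
  proof (intro exI[of _ "length v + max n0 (max K 1)"] allI impI)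
    fix n' assume n': "length v + max n0 (max K 1) \<le> n'"
    define n where "n = n' - length v"
    have n: "n0 \<le> n" "K \<le> n" "0 < n" "n' = n + length v"
      using n' by (auto simp: n_def)
    then obtain s where s: "alive (fst (subtree v W)) s" "length s = n"
      "c' < real (length (pos (snd (subtree v W)) z s)) / real n"
      using n0 by blast
    let ?P = "real (length (pos (snd W) y (v @ s)))"
    have "c' * real n < ?P"
      using s(3) visit n(3) by (simp add: pos_subtree visits_def pos_less_divide_eq mult.commute)
    with K[OF n(2)] have "c < ?P / real n'"
      using n by (simp add: pos_less_divide_eq)
    moreover have "alive (fst W) (v @ s)"
      using visit s(1) by (simp add: alive_subtree visits_def)
    ultimately show "\<exists>u. alive (fst W) u \<and> length u = n' \<and>
        c < real (length (pos (snd W) y u)) / real n'"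
      using s(2) n(4) by auto
  qed
qed

lemma speed_event_of_subtree:
  assumes "0 < a" and "visits 0 y z W v" and "subtree v W \<in> speed_event a z"
  shows "W \<in> speed_event a y"
  unfolding speed_event_iff
proof (intro allI impI)
  fix c :: rat assume "real_of_rat c < a"
  with \<open>0 < a\<close> obtain c' :: rat where "max (real_of_rat c) 0 < real_of_rat c'" "real_of_rat c' < a"
    using of_rat_dense by (metis max_less_iff_conj)
  then show "outruns (real_of_rat c) y W"
    using assms by (intro outruns_of_subtree[of y z W v _ "real_of_rat c'"]) (auto simp: speed_event_iff)
qed

lemma q_le_of_AE_visit:
  assumes "0 < a" and visit: "AE W in brw_space lam kap \<mu>. \<exists>u. visits 0 y z W u"
  shows "q lam kap \<mu> a z \<le> q lam kap \<mu> a y"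
proof -
  let ?M = "brw_space lam kap \<mu>"
  interpret M: prob_space ?M by (rule prob_space_brw)
  have "measure ?M (space ?M - speed_event a y)
      \<le> measure ?M (space ?M) * measure ?M (space ?M - speed_event a z)"
  proof (rule measure_le_mult_first_visit[OF _ _ _ visit])
    fix v w1 w2
    assume "graft v (w1, w2) \<in> space ?M - speed_event a y"
      and "graft v (w1, w2) \<in> first_visit 0 y z v"
    then have "w2 \<notin> speed_event a z"
      using speed_event_of_subtree[OF \<open>0 < a\<close>, of y z "graft v (w1, w2)" v]
      by (auto simp: first_visit_def subtree_graft)
    then show "w1 \<in> space ?M \<and> w2 \<in> space ?M - speed_event a z" by simp
  qed (use sets.top[of ?M] in \<open>auto intro!: sets.Diff\<close>)
  then show ?thesis
    unfolding q_def using M.prob_compl[of "speed_event a y"] M.prob_compl[of "speed_event a z"]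
      M.prob_space by simp
qed

lemma set_pmf_step_child:
  assumes "0 < lam" and "i < kap x"
  shows "x @ [i] \<in> set_pmf (step lam kap x)"
proof -
  have child: "x @ [i] \<in> set_pmf (map_pmf (\<lambda>i. x @ [i]) (pmf_of_set {..<kap x}))"
    using assms by (subst set_map_pmf, subst set_pmf_of_set) auto
  show ?thesis
  proof (cases "x = []")
    case False
    have "0 < lam / (lam + real (kap x))" "lam / (lam + real (kap x)) < 1"
      using assms by auto
    then have coin: "False \<in> set_pmf (bernoulli_pmf (lam / (lam + real (kap x))))"
      by (simp add: set_pmf_iff)
    show ?thesis
      unfolding step_def if_not_P[OF False] set_bind_pmf by (rule UN_I[OF coin]) (use child in simp)
  qed (use child in \<open>simp add: step_def\<close>)
qed

lemma set_pmf_step_parent: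
  assumes "0 < lam" and "x \<noteq> []"
  shows "butlast x \<in> set_pmf (step lam kap x)"
proof -
  have "0 < lam / (lam + real (kap x))" "lam / (lam + real (kap x)) \<le> 1"
    using assms by auto
  then have coin: "True \<in> set_pmf (bernoulli_pmf (lam / (lam + real (kap x))))"
    using assms by (simp add: set_pmf_iff)
  show ?thesis
    unfolding step_def if_not_P[OF \<open>x \<noteq> []\<close>] set_bind_pmf by (rule UN_I[OF coin]) simp
qed

lemma step_path_from_root:
  assumes "0 < lam" and "x \<in> verts kap" and "j < length x"
  shows "take (Suc j) x \<in> set_pmf (step lam kap (take j x))"
  using assms set_pmf_step_child[of lam "x ! j" kap "take j x"]
  by (simp add: verts_def take_Suc_conv_app_nth)

lemma step_path_to_root:
  assumes "0 < lam" and "j < length x"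
  shows "take (length x - Suc j) x \<in> set_pmf (step lam kap (take (length x - j) x))"
proof -
  have "x \<noteq> []" using assms(2) by auto
  then show ?thesis
    using assms set_pmf_step_parent[of lam "take (length x - j) x" kap] by (simp add: butlast_take)
qed

theorem lemma2p7:
  fixes lam a :: real and kap :: "nat list \<Rightarrow> nat" and \<mu> :: "nat pmf"
  assumes lam_pos: "lam > 0"
    and tree: "\<forall>x\<in>verts kap. kap x \<ge> 1"
    and mu0: "pmf \<mu> 0 = 0" and mu1: "pmf \<mu> 1 < 1"
    and mean_fin: "integrable (measure_pmf \<mu>) real"
    and mean_gt1: "measure_pmf.expectation \<mu> real > 1"
    and strongly_recurrent:
      "\<forall>x\<in>verts kap. measure (brw_space lam kap \<mu>) (recurrent_event x) = 1"
    and a_pos: "a > 0"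
    and x_vert: "x \<in> verts kap"
  shows "q lam kap \<mu> a x = q lam kap \<mu> a []"
proof -
  have "[] \<in> verts kap" by (simp add: verts_def)
  have "AE W in brw_space lam kap \<mu>. \<exists>u. visits 0 [] x W u"
    using strongly_recurrent \<open>[] \<in> verts kap\<close> step_path_from_root[OF lam_pos x_vert]
    by (intro AE_visit_of_path[OF mu0, where p = "\<lambda>j. take j x" and k = "length x"]) auto
  then have "q lam kap \<mu> a x \<le> q lam kap \<mu> a []"
    by (rule q_le_of_AE_visit[OF a_pos])
  moreover have "AE W in brw_space lam kap \<mu>. \<exists>u. visits 0 x [] W u"
    using strongly_recurrent x_vert step_path_to_root[OF lam_pos]
    by (intro AE_visit_of_path[OF mu0, where p = "\<lambda>j. take (length x - j) x" and k = "length x"])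
      auto
  then have "q lam kap \<mu> a [] \<le> q lam kap \<mu> a x"
    by (rule q_le_of_AE_visit[OF a_pos])
  ultimately show ?thesis by simp
qed

end
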